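(* Let $n$ be a positive integer and $z$ a real number with $0<|z|\le1/\alpha$. Then \[ \sqrt5\sum_{k=1}^\infty\frac{F_{2k}\zeta(2k)z^{2k}}{k(2k-1+2n)} = \frac{1}{2n-1}\ln\left(-\alpha^2\frac{\sin(\pi\beta z)}{\sin(\pi\alpha z)}\right) -(2n-2)!\sum_{j=1}^n(-1)^j\frac{(2n+1-2j)\operatorname{Cl}_{2j}(2\pi\alpha z)-2\pi\alpha z\operatorname{Cl}_{2j-1}(2\pi\alpha z)}{(2n+1-2j)!\,(2\pi\alpha z)^{2j-1}} +(2n-2)!\sum_{j=1}^n(-1)^j\frac{(2n+1-2j)\operatorname{Cl}_{2j}(2\pi\beta z)-2\pi\beta z\operatorname{Cl}_{2j-1}(2\pi\beta z)}{(2n+1-2j)!\,(2\pi\beta z)^{2j-1}}, \] \[ \sum_{k=1}^\infty\frac{L_{2k}\zeta(2k)z^{2k}}{k(2k-1+2n)} = -\frac{2}{(2n-1)^2}+\frac{1}{2n-1}\ln\left(-\frac{\pi^2z^2}{\sin(\pi\alpha z)\sin(\pi\beta z)}\right) -(2n-2)!\sum_{j=1}^n(-1)^j\frac{(2n+1-2j)\operatorname{Cl}_{2j}(2\pi\alpha z)-2\pi\alpha z\operatorname{Cl}_{2j-1}(2\pi\alpha z)}{(2n+1-2j)!\,(2\pi\alpha z)^{2j-1}} -(2n-2)!\sum_{j=1}^n(-1)^j\frac{(2n+1-2j)\operatorname{Cl}_{2j}(2\pi\beta z)-2\pi\beta z\operatorname{Cl}_{2j-1}(2\pi\beta z)}{(2n+1-2j)!\,(2\pi\beta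 z)^{2j-1}}. \]
   Context: $F_n$, $L_n$ are the Fibonacci and Lucas numbers ($F_0=0,F_1=1$, $L_0=2,L_1=1$, $w_n=w_{n-1}+w_{n-2}$); $\alpha=(1+\sqrt5)/2$, $\beta=(1-\sqrt5)/2$. $\zeta$ is the Riemann zeta function. Clausen functions: $\operatorname{Cl}_1(x)=-\ln(2\sin(x/2))$ and for $n\ge2$, $\operatorname{Cl}_n(x)=\sum_{k\ge1}\sin(kx)/k^n$ if $n$ is even, $\operatorname{Cl}_n(x)=\sum_{k\ge1}\cos(kx)/k^n$ if $n$ is odd. *)

theory Defs
  imports "HOL-Analysis.Analysis" "HOL-Number_Theory.Fib"
begin

fun lucas :: "nat \<Rightarrow> nat" where
  "lucas 0 = 2"
| "lucas (Suc 0) = 1"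
| "lucas (Suc (Suc n)) = lucas (Suc n) + lucas n"

definition gr_alpha :: real where "gr_alpha = (1 + sqrt 5) / 2"
definition gr_beta :: real where "gr_beta = (1 - sqrt 5) / 2"

text \<open>Riemann zeta function on the reals s > 1 (only used at even integers s = 2k >= 2).\<close>
definition rzeta :: "real \<Rightarrow> real" where
  "rzeta s = (\<Sum>m. 1 / real (Suc m) powr s)"

text \<open>Clausen functions. Cl_1 x = - ln (2 sin(x/2)), extended evenly (it is the
  sum of cos(kx)/k), i.e. - ln |2 sin (x/2)|; for n >= 2 the sine/cosine series.\<close>
definition clausen :: "nat \<Rightarrow> real \<Rightarrow> real" where
  "clausen n x =
     (if n = 1 then - ln \<bar>2 * sin (x / 2)\<bar>
      else if even n then (\<Sum>k. sin (real (Suc k) * x) / real (Suc k) ^ n)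
      else (\<Sum>k. cos (real (Suc k) * x) / real (Suc k) ^ n))"

definition clsum :: "nat \<Rightarrow> real \<Rightarrow> real" where
  "clsum n x = (\<Sum>j=1..n. (-1) ^ j *
      ((real (2*n+1-2*j)) * clausen (2*j) x - x * clausen (2*j-1) x)
      / (fact (2*n+1-2*j) * x ^ (2*j-1)))"

definition fterm :: "nat \<Rightarrow> real \<Rightarrow> nat \<Rightarrow> real" where
  "fterm n z k = real (fib (2*k)) * rzeta (real (2*k)) * z ^ (2*k)
                  / (real k * real (2*k - 1 + 2*n))"

definition lterm :: "nat \<Rightarrow> real \<Rightarrow> nat \<Rightarrow> real" where
  "lterm n z k = real (lucas (2*k)) * rzeta (real (2*k)) * z ^ (2*k)
                  / (real k * real (2*k - 1 + 2*n))"

definition RHS_F :: "nat \<Rightarrow> real \<Rightarrow> real" where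
  "RHS_F n z =
     1 / (2 * real n - 1) *
       ln (- (gr_alpha ^ 2) * sin (pi * gr_beta * z) / sin (pi * gr_alpha * z))
     - fact (2*n-2) * clsum n (2 * pi * gr_alpha * z)
     + fact (2*n-2) * clsum n (2 * pi * gr_beta * z)"

definition RHS_L :: "nat \<Rightarrow> real \<Rightarrow> real" where
  "RHS_L n z =
     - 2 / (2 * real n - 1) ^ 2
     + 1 / (2 * real n - 1) *
       ln (- (pi ^ 2 * z ^ 2) / (sin (pi * gr_alpha * z) * sin (pi * gr_beta * z)))
     - fact (2*n-2) * clsum n (2 * pi * gr_alpha * z)
     - fact (2*n-2) * clsum n (2 * pi * gr_beta * z)"

end

theory Submission
  imports Defs "HOL-Real_Asymp.Real_Asymp"
begin

text \<open>
  Since \<open>\<surd>5 F\<^sub>2\<^sub>k = \<alpha>\<^sup>2\<^sup>k - \<beta>\<^sup>2\<^sup>k\<close> and \<open>L\<^sub>2\<^sub>k = \<alpha>\<^sup>2\<^sup>k + \<beta>\<^sup>2\<^sup>k\<close>, both identities are the difference and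
  the sum of one evaluation at \<open>y = \<alpha> z\<close> and \<open>y = \<beta> z\<close>: for \<open>0 < \<bar>y\<bar> < 1\<close>,
  \<open>\<Sum>\<^sub>k \<zeta>(2k) y\<^sup>2\<^sup>k / (k (2k-1+2n)) = -1/(2n-1)\<^sup>2 + ln (\<pi> y / sin (\<pi> y)) / (2n-1) - (2n-2)! clsum n (2\<pi>y)\<close>.
  Taking logarithms in the product formula for the sine and summing over the zeros first gives
  \<open>\<Sum>\<^sub>k \<zeta>(2k) y\<^sup>2\<^sup>k / k = ln (\<pi> y / sin (\<pi> y))\<close>. Multiplying by \<open>y\<^sup>2\<^sup>n\<^sup>-\<^sup>2\<close> and integrating termwise
  from \<open>0\<close> gives \<open>y\<^sup>2\<^sup>n\<^sup>-\<^sup>1\<close> times the left-hand side; on the right, integration by parts leaves the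
  integral of \<open>y\<^sup>2\<^sup>n\<^sup>-\<^sup>1 \<pi> cot (\<pi> y)\<close>, which repeated integration by parts turns into Clausen
  functions via \<open>Cl\<^sub>1' = -cot(x/2)/2\<close>, \<open>Cl\<^sub>2\<^sub>j' = Cl\<^sub>2\<^sub>j\<^sub>-\<^sub>1\<close> and \<open>Cl\<^sub>2\<^sub>j\<^sub>+\<^sub>1' = -Cl\<^sub>2\<^sub>j\<close>.
  On the circle \<open>\<bar>z\<bar> = 1/\<alpha>\<close> the terms are \<open>O(1/k\<^sup>2)\<close> uniformly, so the series are continuous up to
  the boundary and the identities extend to it as limits.
\<close>
section \<open>Clausen functions\<close>

lemma summable_inverse_power_Suc:
  assumes "k \<ge> 2"
  shows "summable (\<lambda>i. 1 / real (Suc i) ^ k)"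
proof -
  have "summable (\<lambda>i. inverse (real i ^ k))"
    by (rule inverse_power_summable) (use assms in auto)
  then have "summable (\<lambda>i. inverse (real (Suc i) ^ k))"
    by (subst summable_Suc_iff)
  then show ?thesis
    by (simp add: inverse_eq_divide)
qed

lemma norm_divide_power_Suc_le:
  fixes t :: real
  assumes "\<bar>t\<bar> \<le> 1" "k \<ge> 2"
  shows "norm (t / real (Suc i) ^ k) \<le> 1 / real (Suc i) ^ 2"
proof -
  have "norm (t / real (Suc i) ^ k) \<le> 1 / real (Suc i) ^ k"
    using assms(1) by (simp add: abs_divide divide_right_mono del: of_nat_Suc)
  also have "\<dots> \<le> 1 / real (Suc i) ^ 2"
    using assms(2) by (intro divide_left_mono power_increasing) auto
  finally show ?thesis .
qed

lemma uniform_limit_trig_series: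
  fixes f :: "nat \<Rightarrow> real \<Rightarrow> real"
  assumes "k \<ge> 2" "\<And>i x. \<bar>f i x\<bar> \<le> 1"
  shows "uniform_limit UNIV (\<lambda>n x. \<Sum>i<n. f i x / real (Suc i) ^ k)
           (\<lambda>x. \<Sum>i. f i x / real (Suc i) ^ k) sequentially"
  by (rule Weierstrass_m_test[OF _ summable_inverse_power_Suc[OF order_refl]])
     (use norm_divide_power_Suc_le assms in auto)

lemma has_real_derivative_trig_series:
  fixes f f' :: "nat \<Rightarrow> real \<Rightarrow> real"
  assumes "k \<ge> 2" "\<And>i x. \<bar>f i x\<bar> \<le> 1" "\<And>i x. \<bar>f' i x\<bar> \<le> 1"
    and "\<And>i x. (f i has_real_derivative real (Suc i) * f' i x) (at x)"
  shows "((\<lambda>x. \<Sum>i. f i x / real (Suc i) ^ Suc k)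
           has_real_derivative (\<Sum>i. f' i x / real (Suc i) ^ k)) (at x)"
proof -
  have "((\<lambda>x. f i x / real (Suc i) ^ Suc k) has_real_derivative f' i x / real (Suc i) ^ k)
          (at x within UNIV)" for i x
    using DERIV_cdivide[OF assms(4)[of i x], where c="real (Suc i) ^ Suc k"]
    by (simp del: of_nat_Suc)
  moreover have "uniformly_convergent_on UNIV (\<lambda>n x. \<Sum>i<n. f' i x / real (Suc i) ^ k)"
    using uniform_limit_trig_series[of k f', OF assms(1,3)]
    unfolding uniformly_convergent_on_def by blast
  moreover have "summable (\<lambda>i. f i 0 / real (Suc i) ^ Suc k)"
    by (rule summable_comparison_test'[OF summable_inverse_power_Suc[OF order_refl]])
       (intro norm_divide_power_Suc_le; use assms(1,2) in simp)
  ultimately show ?thesis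
    by (intro has_field_derivative_series'(2)[OF convex_UNIV]) auto
qed

lemma clausen_even_eq:
  "even k \<Longrightarrow> k \<ge> 2 \<Longrightarrow> clausen k x = (\<Sum>i. sin (real (Suc i) * x) / real (Suc i) ^ k)"
  by (auto simp: clausen_def)

lemma clausen_odd_eq:
  "odd k \<Longrightarrow> k \<ge> 2 \<Longrightarrow> clausen k x = (\<Sum>i. cos (real (Suc i) * x) / real (Suc i) ^ k)"
  by (auto simp: clausen_def)

lemma continuous_on_clausen:
  assumes "k \<ge> 2"
  shows "continuous_on UNIV (clausen k)"
proof (cases "even k")
  case True
  have "continuous_on UNIV (\<lambda>x. \<Sum>i. sin (real (Suc i) * x) / real (Suc i) ^ k)"
    by (rule uniform_limit_theorem[OF _ uniform_limit_trig_series[OF assms]])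
       (auto simp: abs_sin_le_one intro!: always_eventually continuous_intros)
  then show ?thesis
    using clausen_even_eq[OF True assms] by (simp add: fun_eq_iff)
next
  case False
  have "continuous_on UNIV (\<lambda>x. \<Sum>i. cos (real (Suc i) * x) / real (Suc i) ^ k)"
    by (rule uniform_limit_theorem[OF _ uniform_limit_trig_series[OF assms]])
       (auto simp: abs_cos_le_one intro!: always_eventually continuous_intros)
  then show ?thesis
    using clausen_odd_eq[OF False assms] by (simp add: fun_eq_iff)
qed

lemma has_real_derivative_clausen_even:
  assumes "j \<ge> 2"
  shows "(clausen (2*j) has_real_derivative clausen (2*j-1) x) (at x)"
proof -
  have "((\<lambda>x. \<Sum>i. sin (real (Suc i) * x) / real (Suc i) ^ Suc (2*j-1))
          has_real_derivative (\<Sum>i. cos (real (Suc i) * x) / real (Suc i) ^ (2*j-1))) (at x)"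
    using assms
    by (intro has_real_derivative_trig_series)
       (auto simp: abs_sin_le_one abs_cos_le_one intro!: derivative_eq_intros)
  moreover have "clausen (2*j) = (\<lambda>x. \<Sum>i. sin (real (Suc i) * x) / real (Suc i) ^ Suc (2*j-1))"
    using assms by (intro ext) (simp add: clausen_even_eq Suc_diff_Suc)
  moreover have "clausen (2*j-1) x = (\<Sum>i. cos (real (Suc i) * x) / real (Suc i) ^ (2*j-1))"
    using assms by (intro clausen_odd_eq) auto
  ultimately show ?thesis
    by simp
qed

lemma has_real_derivative_clausen_odd:
  assumes "j \<ge> 1"
  shows "(clausen (2*j+1) has_real_derivative - clausen (2*j) x) (at x)"
proof -
  have summable: "summable (\<lambda>i. sin (real (Suc i) * x) / real (Suc i) ^ (2*j))"
    by (rule summable_comparison_test'[OF summable_inverse_power_Suc[OF order_refl]])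
       (use norm_divide_power_Suc_le[OF abs_sin_le_one] assms in auto)
  have "((\<lambda>x. \<Sum>i. cos (real (Suc i) * x) / real (Suc i) ^ Suc (2*j))
          has_real_derivative (\<Sum>i. - sin (real (Suc i) * x) / real (Suc i) ^ (2*j))) (at x)"
    using assms
    by (intro has_real_derivative_trig_series)
       (auto simp: abs_sin_le_one abs_cos_le_one intro!: derivative_eq_intros)
  moreover have "clausen (2*j+1) = (\<lambda>x. \<Sum>i. cos (real (Suc i) * x) / real (Suc i) ^ Suc (2*j))"
    using assms by (intro ext) (simp add: clausen_odd_eq)
  moreover have "(\<Sum>i. - sin (real (Suc i) * x) / real (Suc i) ^ (2*j)) = - clausen (2*j) x"
    using assms suminf_minus[OF summable] by (simp add: clausen_even_eq)
  ultimately show ?thesis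
    by simp
qed

lemma clausen_even_minus:
  assumes "j \<ge> 1"
  shows "clausen (2*j) (-x) = - clausen (2*j) x"
proof -
  have "summable (\<lambda>i. sin (real (Suc i) * x) / real (Suc i) ^ (2*j))"
    by (rule summable_comparison_test'[OF summable_inverse_power_Suc[OF order_refl]])
       (use norm_divide_power_Suc_le[OF abs_sin_le_one] assms in auto)
  then show ?thesis
    using assms suminf_minus by (simp add: clausen_even_eq)
qed

lemma clausen_odd_minus:
  assumes "j \<ge> 1"
  shows "clausen (2*j-1) (-x) = clausen (2*j-1) x"
proof (cases "j = 1")
  case False
  then have "odd (2*j-1)" "2*j-1 \<ge> 2"
    using assms by auto
  then show ?thesis
    by (simp add: clausen_odd_eq)
qed (simp add: clausen_def)

lemma clsum_minus: "clsum n (-x) = clsum n x"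
  unfolding clsum_def
proof (rule sum.cong[OF refl])
  fix j assume "j \<in> {1..n}"
  then have j: "j \<ge> 1" and odd: "odd (2*j-1)"
    by auto
  have neg: "s * (c * - A - - x * B) / (f * - X) = s * (c * A - x * B) / (f * X)"
    for s c A B f X :: real
  proof -
    have "s * (c * - A - - x * B) = - (s * (c * A - x * B))"
      by (simp add: algebra_simps)
    then show ?thesis
      by simp
  qed
  show "(-1)^j * (real (2*n+1-2*j) * clausen (2*j) (-x) - (-x) * clausen (2*j-1) (-x))
               / (fact (2*n+1-2*j) * (-x)^(2*j-1))
           = (-1)^j * (real (2*n+1-2*j) * clausen (2*j) x - x * clausen (2*j-1) x)
               / (fact (2*n+1-2*j) * x^(2*j-1))"
    by (simp only: clausen_even_minus[OF j] clausen_odd_minus[OF j] power_minus_odd[OF odd] neg)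
qed

section \<open>The derivative of \<open>Cl\<^sub>2\<close>\<close>

lemma sums_power_cos_divide:
  fixes r x :: real
  assumes r: "0 \<le> r" "r < 1"
  shows "(\<lambda>k. r ^ Suc k / real (Suc k) * cos (real (Suc k) * x))
           sums (- ln (1 - 2*r*cos x + r^2) / 2)"
proof -
  define w where "w = complex_of_real r * cis x"
  have norm_w: "norm w = r"
    using r by (simp add: w_def norm_mult)
  then have "w \<noteq> 1"
    using r by auto
  have norm_sq: "(norm (1 - w))^2 = 1 - 2*r*cos x + r^2"
  proof -
    have "(norm (1 - w))^2 = (1 - r * cos x)^2 + (r * sin x)^2"
      by (simp add: cmod_power2 w_def cis.sel)
    also have "\<dots> = 1 - 2*r*cos x + r^2 * ((sin x)^2 + (cos x)^2)"
      by algebra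
    finally show ?thesis
      by simp
  qed
  have "norm (-w) < 1"
    using norm_w r by simp
  from bounded_linear.sums[OF bounded_linear_Re Ln_series'[OF this]]
  have "(\<lambda>n. - (r^n / real n * cos (real n * x))) sums Re (ln (1 - w))"
    by (simp add: w_def power_mult_distrib Complex.DeMoivre Re_divide_of_nat)
  also have "Re (ln (1 - w)) = ln ((norm (1 - w))^2) / 2"
    using \<open>w \<noteq> 1\<close> by (simp add: ln_realpow)
  finally have "(\<lambda>n. r^n / real n * cos (real n * x)) sums (- ln (1 - 2*r*cos x + r^2) / 2)"
    using sums_minus norm_sq by fastforce
  then show ?thesis
    by (subst sums_Suc_iff) simp
qed

text \<open>For \<open>r < 1\<close> the differentiated series converges
  uniformly, unlike the series of \<open>Cl\<^sub>1\<close> itself, so \<open>Cl\<^sub>2' = Cl\<^sub>1\<close> is obtained in the limit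
  \<open>r \<rightarrow> 1\<close>, where the derivatives converge locally uniformly away from \<open>0\<close> and \<open>2\<pi>\<close>.\<close>

definition clausen2_abel :: "real \<Rightarrow> real \<Rightarrow> real" where
  "clausen2_abel r x = (\<Sum>k. r ^ Suc k / real (Suc k)^2 * sin (real (Suc k) * x))"

lemma clausen2_abel_has_real_derivative:
  assumes r: "0 \<le> r" "r < 1"
  shows "(clausen2_abel r has_real_derivative (- ln (1 - 2*r*cos x + r^2) / 2)) (at x)"
proof -
  have "((\<lambda>x. r ^ Suc k / real (Suc k)^2 * sin (real (Suc k) * x)) has_real_derivative
           r ^ Suc k / real (Suc k) * cos (real (Suc k) * x)) (at x within UNIV)" for k x
  proof -
    have "((\<lambda>x. r ^ Suc k / real (Suc k)^2 * sin (real (Suc k) * x)) has_real_derivative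
             r ^ Suc k / real (Suc k)^2 * (cos (real (Suc k) * x) * real (Suc k))) (at x)"
      by (rule derivative_eq_intros refl)+ simp
    then show ?thesis
      by (simp add: power2_eq_square mult.assoc del: of_nat_Suc)
  qed
  moreover have "uniformly_convergent_on UNIV
      (\<lambda>n x. \<Sum>k<n. r ^ Suc k / real (Suc k) * cos (real (Suc k) * x))"
  proof (rule Weierstrass_m_test'[where M="\<lambda>k. r ^ Suc k"])
    fix k :: nat and x :: real
    have "norm (r ^ Suc k / real (Suc k) * cos (real (Suc k) * x))
            = r ^ Suc k / real (Suc k) * \<bar>cos (real (Suc k) * x)\<bar>"
      using r by (simp add: abs_mult)
    also have "\<dots> \<le> r ^ Suc k / 1 * 1"
      using r by (intro mult_mono divide_left_mono) (auto simp: abs_cos_le_one)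
    finally show "norm (r ^ Suc k / real (Suc k) * cos (real (Suc k) * x)) \<le> r ^ Suc k"
      by simp
  qed (use r in \<open>simp add: summable_geometric\<close>)
  ultimately have "((\<lambda>x. \<Sum>k. r ^ Suc k / real (Suc k)^2 * sin (real (Suc k) * x))
      has_real_derivative (\<Sum>k. r ^ Suc k / real (Suc k) * cos (real (Suc k) * x))) (at x)"
    by (intro has_field_derivative_series'(2)[OF convex_UNIV, of _ _ 0]) auto
  then show ?thesis
    using sums_power_cos_divide[OF r] by (simp add: clausen2_abel_def[abs_def] sums_iff)
qed

lemma continuous_on_clausen2_abel: "continuous_on {0..1} (\<lambda>r. clausen2_abel r x)"
proof -
  have limit: "uniform_limit {0..1}
          (\<lambda>n r. \<Sum>k<n. r ^ Suc k / real (Suc k)^2 * sin (real (Suc k) * x))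
          (\<lambda>r. \<Sum>k. r ^ Suc k / real (Suc k)^2 * sin (real (Suc k) * x)) sequentially"
  proof (rule Weierstrass_m_test[OF _ summable_inverse_power_Suc[OF order_refl]])
    fix k :: nat and r :: real
    assume "r \<in> {0..1}"
    then have "0 \<le> r ^ Suc k" "r ^ Suc k \<le> 1"
      by (auto simp del: power_Suc intro: power_le_one)
    then have "r ^ Suc k / real (Suc k)^2 * \<bar>sin (real (Suc k) * x)\<bar> \<le> 1 / real (Suc k)^2 * 1"
      by (intro mult_mono divide_right_mono) (auto simp: abs_sin_le_one)
    then show "norm (r ^ Suc k / real (Suc k)^2 * sin (real (Suc k) * x)) \<le> 1 / real (Suc k)^2"
      using \<open>0 \<le> r ^ Suc k\<close> by (simp add: abs_mult del: power_Suc)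
  qed
  show ?thesis
    unfolding clausen2_abel_def
    by (rule uniform_limit_theorem[OF _ limit trivial_limit_sequentially])
       (auto intro!: always_eventually continuous_intros)
qed

lemma abs_ln_diff_le:
  fixes a b m :: real
  assumes "m > 0" "a \<ge> m" "b \<ge> m"
  shows "\<bar>ln a - ln b\<bar> \<le> \<bar>a - b\<bar> / m"
proof -
  have "ln a - ln b \<le> (a - b) / b" "ln b - ln a \<le> (b - a) / a"
    using ln_le_minus_one[of "a/b"] ln_le_minus_one[of "b/a"] assms
    by (simp_all add: ln_div diff_divide_distrib)
  moreover have "(a - b) / b \<le> \<bar>a - b\<bar> / m" "(b - a) / a \<le> \<bar>a - b\<bar> / m"
    using assms by (auto intro!: frac_le)
  ultimately show ?thesis
    by linarith
qed

lemma cos_le_cos_of_between: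
  assumes "0 < d" "d \<le> pi" "d \<le> x" "x \<le> 2*pi - d"
  shows "cos x \<le> cos d"
proof (cases "x \<le> pi")
  case True
  then show ?thesis
    using assms by (intro cos_monotone_0_pi_le) auto
next
  case False
  have "cos x = cos (2*pi - x)"
    by (simp add: cos_diff)
  also have "\<dots> \<le> cos d"
    using assms False by (intro cos_monotone_0_pi_le) auto
  finally show ?thesis .
qed

lemma abs_ln_abel_kernel_diff_le:
  fixes r x d :: real
  assumes r: "1/2 \<le> r" "r < 1" and d: "0 < d" "d \<le> pi" "d \<le> x" "x \<le> 2*pi - d"
  shows "\<bar>ln (1 - 2*r*cos x + r^2) - ln (2 - 2*cos x)\<bar> \<le> 4 * (1 - r) / (1 - cos d)"
proof -
  have cos_x: "cos x \<le> cos d"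
    using d by (rule cos_le_cos_of_between)
  have m: "1 - cos d > 0"
    using d cos_monotone_0_pi[of 0 d] by simp
  have "1 - 2*r*cos x + r^2 = (1 - r)^2 + (2*r - 1) * (1 - cos x) + (1 - cos x)"
    by (simp add: power2_eq_square algebra_simps)
  moreover have "(2*r - 1) * (1 - cos x) \<ge> 0"
    using r cos_le_one[of x] by (intro mult_nonneg_nonneg) auto
  ultimately have a: "1 - 2*r*cos x + r^2 \<ge> 1 - cos d"
    using cos_x by (smt (verit) zero_le_power2)
  have b: "2 - 2*cos x \<ge> 1 - cos d"
    using cos_x cos_le_one[of x] by linarith
  have "(1 - 2*r*cos x + r^2) - (2 - 2*cos x) = (r - 1) * (r + 1 - 2 * cos x)"
    by (simp add: power2_eq_square algebra_simps)
  then have "\<bar>(1 - 2*r*cos x + r^2) - (2 - 2*cos x)\<bar> = (1 - r) * \<bar>r + 1 - 2 * cos x\<bar>"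
    using r by (simp only: abs_mult) simp
  also have "\<dots> \<le> (1 - r) * 4"
  proof -
    have "\<bar>r + 1 - 2 * cos x\<bar> \<le> 4"
      using r cos_le_one[of x] cos_ge_minus_one[of x] by linarith
    then show ?thesis
      using r by (intro mult_left_mono) auto
  qed
  finally have "\<bar>(1 - 2*r*cos x + r^2) - (2 - 2*cos x)\<bar> \<le> (1 - r) * 4" .
  then show ?thesis
    using abs_ln_diff_le[OF m a b] divide_right_mono[of _ _ "1 - cos d"] m
    by (smt (verit) mult.commute)
qed

lemma eventually_abel_log_kernel_close:
  fixes r :: "nat \<Rightarrow> real"
  assumes r: "r \<longlonglongrightarrow> 1" "\<And>N. 1/2 \<le> r N" "\<And>N. r N < 1"
    and d: "0 < d" "d \<le> pi" and "e > 0"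
  shows "\<forall>\<^sub>F N in sequentially. \<forall>y\<in>{d..2*pi-d}. \<forall>h.
           norm ((- ln (1 - 2 * r N * cos y + (r N)^2) / 2) * h - (- ln (2 - 2*cos y) / 2) * h)
             \<le> e * norm h"
proof -
  have "(\<lambda>N. 2 * (1 - r N)) \<longlonglongrightarrow> 0"
    using r(1) by (auto intro!: tendsto_eq_intros)
  then have "((\<lambda>N. 2 * (1 - r N) / (1 - cos d)) \<longlongrightarrow> 0) sequentially"
    by (rule tendsto_divide_zero)
  then have "\<forall>\<^sub>F N in sequentially. 2 * (1 - r N) / (1 - cos d) < e"
    using \<open>e > 0\<close> by (rule order_tendstoD)
  then show ?thesis
  proof eventually_elim
    case (elim N)
    show ?case
    proof (intro ballI allI)
      fix y h
      assume "y \<in> {d..2*pi-d}"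
      then have "\<bar>ln (1 - 2 * r N * cos y + (r N)^2) - ln (2 - 2*cos y)\<bar>
                   \<le> 2 * (2 * (1 - r N) / (1 - cos d))"
        using abs_ln_abel_kernel_diff_le[OF r(2,3) d] by simp
      then have "\<bar>- ln (1 - 2 * r N * cos y + (r N)^2) / 2 - - ln (2 - 2*cos y) / 2\<bar> \<le> e"
        using elim by linarith
      then have "\<bar>- ln (1 - 2 * r N * cos y + (r N)^2) / 2 - - ln (2 - 2*cos y) / 2\<bar> * \<bar>h\<bar>
                   \<le> e * \<bar>h\<bar>"
        by (rule mult_right_mono) simp
      then show "norm ((- ln (1 - 2 * r N * cos y + (r N)^2) / 2) * h - (- ln (2 - 2*cos y) / 2) * h)
                   \<le> e * norm h"
        by (metis abs_mult left_diff_distrib real_norm_def)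
    qed
  qed
qed

lemma clausen_1_eq_ln:
  assumes "0 < x" "x < 2*pi"
  shows "clausen 1 x = - ln (2 - 2*cos x) / 2"
proof -
  have sin_pos: "sin (x/2) > 0"
    using assms by (intro sin_gt_zero) auto
  have square: "2 - 2 * cos x = (2 * sin (x/2))^2"
    using cos_double_sin[of "x/2"] by (simp add: power2_eq_square algebra_simps)
  have "ln ((2 * sin (x/2))^2) = 2 * ln (2 * sin (x/2))"
    using sin_pos by (subst ln_realpow) auto
  then show ?thesis
    unfolding square using sin_pos by (simp add: clausen_def)
qed

lemma has_real_derivative_clausen_2:
  assumes x: "0 < x" "x < 2*pi"
  shows "(clausen 2 has_real_derivative clausen 1 x) (at x)"
proof -
  define d where "d = min x (2*pi - x) / 2"
  have d: "0 < d" "d < pi" "d < x" "x < 2*pi - d"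
    using x by (auto simp: d_def min_def field_simps)
  define S where "S = {d..2*pi-d}"
  define r where "r N = 1 - 1 / real (N+2)" for N :: nat
  have r: "0 \<le> r N" "r N < 1" "1/2 \<le> r N" for N
    unfolding r_def by (auto simp: field_simps)
  have lim_r: "r \<longlonglongrightarrow> 1"
    unfolding r_def by real_asymp
  have abel_lim: "(\<lambda>N. clausen2_abel (r N) y) \<longlonglongrightarrow> clausen 2 y" for y
    using continuous_on_tendsto_compose[OF continuous_on_clausen2_abel lim_r] r
    by (simp add: clausen2_abel_def clausen_even_eq less_imp_le)
  have abel_deriv: "(clausen2_abel (r N) has_derivative (*) (- ln (1 - 2 * r N * cos y + (r N)^2) / 2))
                      (at y within S)" for N y
    using clausen2_abel_has_real_derivative[OF r(1,2)]
    by (auto simp: has_field_derivative_def intro: has_derivative_at_withinI)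
  have deriv_conv: "\<forall>\<^sub>F N in sequentially. \<forall>y\<in>S. \<forall>h.
      norm ((- ln (1 - 2 * r N * cos y + (r N)^2) / 2) * h - (- ln (2 - 2*cos y) / 2) * h)
        \<le> e * norm h" if "e > 0" for e
    unfolding S_def using d r that by (intro eventually_abel_log_kernel_close lim_r) auto
  obtain g where g: "\<And>y. y \<in> S \<Longrightarrow> (\<lambda>N. clausen2_abel (r N) y) \<longlonglongrightarrow> g y \<and>
                    (g has_derivative (*) (- ln (2 - 2*cos y) / 2)) (at y within S)"
  proof -
    have "convex S" "x \<in> S"
      using d by (simp_all add: S_def)
    then show ?thesis
      using has_derivative_sequence[OF _ abel_deriv deriv_conv _ abel_lim] that by blast
  qed
  have "(g has_real_derivative (- ln (2 - 2*cos x) / 2)) (at x)"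
    using g[of x] x d at_within_interior[of x S]
    by (simp add: S_def has_field_derivative_def)
  then have "(clausen 2 has_real_derivative (- ln (2 - 2*cos x) / 2)) (at x)"
  proof (rule has_field_derivative_transform_within_open[where S="{d<..<2*pi-d}"])
    show "g y = clausen 2 y" if "y \<in> {d<..<2*pi-d}" for y
      using g[of y] abel_lim[of y] that by (auto simp: S_def intro: LIMSEQ_unique)
  qed (use d in auto)
  then show ?thesis
    using clausen_1_eq_ln[OF x] by simp
qed

lemma has_real_derivative_clausen_1:
  assumes "0 < x" "x < 2*pi"
  shows "(clausen 1 has_real_derivative - cot (x/2) / 2) (at x)"
proof -
  have "sin (x/2) > 0"
    using assms by (intro sin_gt_zero) auto
  then have "((\<lambda>x. - ln (2 * sin (x/2))) has_real_derivative - cot (x/2) / 2) (at x)"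
    by (auto intro!: derivative_eq_intros simp: cot_def field_simps)
  then show ?thesis
  proof (rule has_field_derivative_transform_within_open[where S="{0<..<2*pi}"])
    fix y :: real
    assume "y \<in> {0<..<2*pi}"
    then have "sin (y/2) > 0"
      by (intro sin_gt_zero) auto
    then show "- ln (2 * sin (y/2)) = clausen 1 y"
      by (simp add: clausen_def)
  qed (use assms in auto)
qed

section \<open>Even zeta values and the sine product\<close>

lemma rzeta_even_sums:
  assumes "k \<ge> 1"
  shows "(\<lambda>m. 1 / real (Suc m) ^ (2*k)) sums rzeta (real (2*k))"
proof -
  have "real (Suc m) powr real (2*k) = real (Suc m) ^ (2*k)" for m
    by (subst powr_realpow) auto
  then show ?thesis
    using summable_inverse_power_Suc[of "2*k"] assms by (simp add: rzeta_def summable_sums)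
qed

lemma rzeta_even_bounds:
  assumes "k \<ge> 1"
  shows "0 \<le> rzeta (real (2*k))" "rzeta (real (2*k)) \<le> 3"
proof -
  note sums = rzeta_even_sums[OF assms]
  show "0 \<le> rzeta (real (2*k))"
    by (rule sums_le[OF _ sums_zero sums]) auto
  have "(\<lambda>m. 1 / real (Suc m) ^ 2) sums (pi^2/6)"
    using inverse_squares_sums by (simp add: add.commute)
  then have "rzeta (real (2*k)) \<le> pi^2/6"
    using assms by (intro sums_le[OF _ sums]) (auto intro!: divide_left_mono power_increasing)
  also have "\<dots> \<le> 4^2/6"
    using pi_less_4 pi_gt_zero by (intro divide_right_mono power_mono) auto
  finally show "rzeta (real (2*k)) \<le> 3"
    by simp
qed

lemma sums_power_divide_Suc:
  fixes t :: real
  assumes "\<bar>t\<bar> < 1"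
  shows "(\<lambda>k. t ^ Suc k / real (Suc k)) sums (- ln (1 - t))"
proof -
  have "\<bar>-t\<bar> < 1"
    using assms by simp
  from sums_minus[OF ln_series'[OF this]]
  have "(\<lambda>n. t^n / real n) sums (- ln (1 - t))"
    by simp
  then show ?thesis
    by (subst sums_Suc_iff) simp
qed

lemma sin_pi_divide_pos:
  fixes y :: real
  assumes "0 < \<bar>y\<bar>" "\<bar>y\<bar> < 1"
  shows "sin (pi * y) / (pi * y) > 0"
proof -
  have "sin (pi * \<bar>y\<bar>) > 0"
    using assms by (intro sin_gt_zero) auto
  moreover have "sin (pi * y) / (pi * y) = sin (pi * \<bar>y\<bar>) / (pi * \<bar>y\<bar>)"
    by (cases "y \<ge> 0") auto
  ultimately show ?thesis
    using assms by simp
qed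

lemma sums_ln_sin_product:
  fixes y :: real
  assumes y: "0 < \<bar>y\<bar>" "\<bar>y\<bar> < 1"
  shows "(\<lambda>m. - ln (1 - y^2 / real (Suc m)^2)) sums ln (pi * y / sin (pi * y))"
proof -
  have factor_pos: "0 < 1 - y^2 / real (Suc m)^2" for m
  proof -
    have "y^2 < 1"
      using y by (simp add: abs_square_less_1)
    also have "1 \<le> real (Suc m)^2"
      by simp
    finally show ?thesis
      by simp
  qed
  have "(\<lambda>N. \<Prod>m<N. 1 - y^2 / real (Suc m)^2) \<longlonglongrightarrow> sin (pi * y) / (pi * y)"
    using sin_product_formula_real'[of y] y by (simp add: prod.atLeast1_atMost_eq)
  then have "(\<lambda>N. - ln (\<Prod>m<N. 1 - y^2 / real (Suc m)^2)) \<longlonglongrightarrow> - ln (sin (pi * y) / (pi * y))"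
    using sin_pi_divide_pos[OF y] by (intro tendsto_intros) auto
  moreover have "- ln (\<Prod>m<N. 1 - y^2 / real (Suc m)^2) = (\<Sum>m<N. - ln (1 - y^2 / real (Suc m)^2))"
    for N
    using factor_pos by (simp add: ln_prod sum_negf less_imp_neq[symmetric])
  moreover have "- ln (sin (pi * y) / (pi * y)) = ln (pi * y / sin (pi * y))"
    using sin_pi_divide_pos[OF y] by (subst ln_inverse[symmetric]) auto
  ultimately show ?thesis
    unfolding sums_def by simp
qed

text \<open>Expanding each \<open>-ln (1 - y\<^sup>2/m\<^sup>2)\<close> and summing over \<open>m\<close> first; all terms are
  nonnegative, so the double series may be rearranged.\<close>

lemma sums_rzeta_ln_sin:
  fixes y :: real
  assumes y: "0 < \<bar>y\<bar>" "\<bar>y\<bar> < 1"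
  shows "(\<lambda>k. rzeta (real (2 * Suc k)) * y ^ (2 * Suc k) / real (Suc k))
           sums ln (pi * y / sin (pi * y))"
proof -
  define t where "t m = y^2 / real (Suc m)^2" for m
  have t: "0 \<le> t m" "t m < 1" for m
  proof -
    show "0 \<le> t m"
      by (simp add: t_def)
    have "y^2 < 1"
      using y by (simp add: abs_square_less_1)
    also have "1 \<le> real (Suc m)^2"
      by simp
    finally show "t m < 1"
      by (simp add: t_def)
  qed
  define f where "f = (\<lambda>(m, k). t m ^ Suc k / real (Suc k))"
  have f_nonneg: "f (m, k) \<ge> 0" for m k
    using t by (simp add: f_def)
  have inner: "((\<lambda>k. f (m, k)) has_sum (- ln (1 - t m))) UNIV" for m
    using sums_power_divide_Suc[of "t m"] t[of m] f_nonneg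
    by (intro sums_nonneg_imp_has_sum) (auto simp: f_def)
  have outer: "((\<lambda>m. - ln (1 - t m)) has_sum ln (pi * y / sin (pi * y))) UNIV"
    using sums_ln_sin_product[OF y] t
    by (intro sums_nonneg_imp_has_sum) (auto simp: t_def)
  have "f summable_on UNIV \<times> UNIV"
    using summable_on_SigmaI[of UNIV f "\<lambda>_. UNIV" "\<lambda>m. - ln (1 - t m)"] inner outer f_nonneg
    by (auto simp: summable_on_def)
  then have "(f has_sum ln (pi * y / sin (pi * y))) (UNIV \<times> UNIV)"
    using has_sum_SigmaI[of UNIV f "\<lambda>_. UNIV" "\<lambda>m. - ln (1 - t m)"] inner outer by auto
  then have swapped: "((\<lambda>(k, m). f (m, k)) has_sum ln (pi * y / sin (pi * y))) (UNIV \<times> UNIV)"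
    by (subst (asm) has_sum_swap) simp
  have "((\<lambda>m. f (m, k)) has_sum (rzeta (real (2 * Suc k)) * y ^ (2 * Suc k) / real (Suc k))) UNIV"
    for k
  proof -
    have "t m ^ Suc k = y ^ (2 * Suc k) / real (Suc m) ^ (2 * Suc k)" for m
      unfolding t_def power_divide power_mult ..
    then have f_eq: "f (m, k) = y ^ (2 * Suc k) / real (Suc k) * (1 / real (Suc m) ^ (2 * Suc k))"
      for m
      by (simp add: f_def)
    have "(\<lambda>m. y ^ (2 * Suc k) / real (Suc k) * (1 / real (Suc m) ^ (2 * Suc k)))
            sums (y ^ (2 * Suc k) / real (Suc k) * rzeta (real (2 * Suc k)))"
      by (rule sums_mult[OF rzeta_even_sums]) simp
    then have "(\<lambda>m. f (m, k)) sums (rzeta (real (2 * Suc k)) * y ^ (2 * Suc k) / real (Suc k))"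
      unfolding f_eq by (simp add: mult.commute)
    then show ?thesis
      using f_nonneg by (intro sums_nonneg_imp_has_sum) auto
  qed
  then have "((\<lambda>k. rzeta (real (2 * Suc k)) * y ^ (2 * Suc k) / real (Suc k))
               has_sum ln (pi * y / sin (pi * y))) UNIV"
    by (intro has_sum_SigmaD[OF swapped]) auto
  then show ?thesis
    by (rule has_sum_imp_sums)
qed

section \<open>Integrating \<open>x\<^sup>2\<^sup>n\<^sup>-\<^sup>1 cot (x/2)\<close>\<close>

definition clausen_poly :: "nat \<Rightarrow> real \<Rightarrow> real" where
  "clausen_poly n x = (\<Sum>j=1..n. (-1)^j * (x^(2*n-2*j) * clausen (2*j) x / fact (2*n-2*j)
                                 - x^(2*n+1-2*j) * clausen (2*j-1) x / fact (2*n+1-2*j)))"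

lemma clausen_poly_eq_clsum:
  assumes "x \<noteq> 0"
  shows "clausen_poly n x = x^(2*n-1) * clsum n x"
  unfolding clsum_def clausen_poly_def sum_distrib_left
proof (rule sum.cong[OF refl])
  fix j assume j: "j \<in> {1..n}"
  define p where "p = 2*n - 2*j"
  have "2*n+1-2*j = Suc p" "2*n-1 = p + (2*j-1)" "2*n-2*j = p"
    using j by (auto simp: p_def)
  then show "(-1)^j * (x^(2*n-2*j) * clausen (2*j) x / fact (2*n-2*j)
               - x^(2*n+1-2*j) * clausen (2*j-1) x / fact (2*n+1-2*j))
           = x^(2*n-1) * ((-1)^j * (real (2*n+1-2*j) * clausen (2*j) x - x * clausen (2*j-1) x)
               / (fact (2*n+1-2*j) * x^(2*j-1)))"
    using assms by (simp add: power_add fact_Suc field_simps del: of_nat_Suc)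
qed

lemma has_real_derivative_power_fact_diff:
  fixes C D :: "real \<Rightarrow> real"
  assumes C: "(C has_real_derivative D x) (at x)" and D: "(D has_real_derivative D') (at x)"
  shows "((\<lambda>x. x^p * C x / fact p - x^Suc p * D x / fact (Suc p)) has_real_derivative
           (if p = 0 then 0 else x^(p-1) * C x / fact (p-1)) - x^Suc p * D' / fact (Suc p)) (at x)"
proof (cases p)
  case 0
  have "((\<lambda>x. C x - x * D x) has_real_derivative (D x - (1 * D x + x * D'))) (at x)"
    by (rule derivative_eq_intros C D refl | simp)+
  then show ?thesis
    using 0 by simp
next
  case (Suc q)
  have "((\<lambda>x. x^p * C x / fact p - x^Suc p * D x / fact (Suc p)) has_real_derivative
          (real p * x^(p-1) * C x + x^p * D x) / fact p
            - (real (Suc p) * x^p * D x + x^Suc p * D') / fact (Suc p)) (at x)"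
    by (rule derivative_eq_intros C D refl | simp add: mult_ac)+
  moreover have "(real p * x^(p-1) * C x + x^p * D x) / fact p
                   - (real (Suc p) * x^p * D x + x^Suc p * D') / fact (Suc p)
                 = x^(p-1) * C x / fact (p-1) - x^Suc p * D' / fact (Suc p)"
    using Suc by (simp add: fact_Suc field_simps del: of_nat_Suc)
  ultimately show ?thesis
    using Suc by simp
qed

text \<open>The derivative of the \<open>j\<close>-th summand of \<^const>\<open>clausen_poly\<close> is
  \<open>(-1)\<^sup>j (E j + E (j-1))\<close> for the following \<open>E\<close>, so the derivative of the sum telescopes.\<close>

definition clausen_poly_deriv_part :: "nat \<Rightarrow> real \<Rightarrow> nat \<Rightarrow> real" where
  "clausen_poly_deriv_part n x j =
     (if j = 0 then x^(2*n-1) * cot (x/2) / (2 * fact (2*n-1))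
      else if j < n then x^(2*n-2*j-1) * clausen (2*j) x / fact (2*n-2*j-1) else 0)"

lemma has_real_derivative_clausen_poly_summand:
  assumes x: "0 < x" "x < 2*pi" and j: "1 \<le> j" "j \<le> n"
  shows "((\<lambda>x. x^(2*n-2*j) * clausen (2*j) x / fact (2*n-2*j)
                 - x^(2*n+1-2*j) * clausen (2*j-1) x / fact (2*n+1-2*j)) has_real_derivative
          clausen_poly_deriv_part n x j + clausen_poly_deriv_part n x (j-1)) (at x)"
proof -
  define p where "p = 2*n - 2*j"
  have p: "2*n+1-2*j = Suc p" "2*n-2*j = p"
    using j by (auto simp: p_def)
  have E_j: "(if p = 0 then 0 else x^(p-1) * clausen (2*j) x / fact (p-1))
               = clausen_poly_deriv_part n x j"
    using j by (auto simp: clausen_poly_deriv_part_def p_def)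
  obtain D' where C': "(clausen (2*j) has_real_derivative clausen (2*j-1) x) (at x)"
    and D': "(clausen (2*j-1) has_real_derivative D') (at x)"
    and E_prev: "clausen_poly_deriv_part n x (j-1) = - (x^Suc p * D' / fact (Suc p))"
  proof (cases "j = 1")
    case True
    then have "Suc p = 2*n-1"
      using j by (simp add: p_def)
    show ?thesis
    proof (rule that)
      show "(clausen (2*j) has_real_derivative clausen (2*j-1) x) (at x)"
        using True has_real_derivative_clausen_2[OF x] by simp
      show "(clausen (2*j-1) has_real_derivative - cot (x/2) / 2) (at x)"
        using True has_real_derivative_clausen_1[OF x] by simp
      show "clausen_poly_deriv_part n x (j-1) = - (x^Suc p * (- cot (x/2) / 2) / fact (Suc p))"
        unfolding \<open>Suc p = 2*n-1\<close> using True by (simp add: clausen_poly_deriv_part_def)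
    qed
  next
    case False
    then have "j \<ge> 2"
      using j by auto
    have odd: "2*j-1 = 2*(j-1)+1" and exponent: "2*n - 2*(j-1) - 1 = Suc p"
      using \<open>j \<ge> 2\<close> j by (auto simp: p_def)
    show ?thesis
    proof (rule that)
      show "(clausen (2*j) has_real_derivative clausen (2*j-1) x) (at x)"
        using \<open>j \<ge> 2\<close> by (rule has_real_derivative_clausen_even)
      show "(clausen (2*j-1) has_real_derivative - clausen (2*(j-1)) x) (at x)"
        unfolding odd using \<open>j \<ge> 2\<close> by (intro has_real_derivative_clausen_odd) simp
      show "clausen_poly_deriv_part n x (j-1) = - (x^Suc p * - clausen (2*(j-1)) x / fact (Suc p))"
        using \<open>j \<ge> 2\<close> j unfolding clausen_poly_deriv_part_def exponent by simp
    qed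
  qed
  have "((\<lambda>x. x^p * clausen (2*j) x / fact p - x^Suc p * clausen (2*j-1) x / fact (Suc p))
          has_real_derivative clausen_poly_deriv_part n x j + clausen_poly_deriv_part n x (j-1)) (at x)"
    using has_real_derivative_power_fact_diff[OF C' D', of p] E_j E_prev by simp
  then show ?thesis
    unfolding p .
qed

lemma has_real_derivative_clausen_poly:
  assumes x: "0 < x" "x < 2*pi" and n: "n \<ge> 1"
  shows "(clausen_poly n has_real_derivative
           - (x^(2*n-1) * cot (x/2) / (2 * fact (2*n-1)))) (at x)"
proof -
  define E where "E j = (-1)^j * clausen_poly_deriv_part n x j" for j
  have "(clausen_poly n has_real_derivative
          (\<Sum>j=1..n. (-1)^j * (clausen_poly_deriv_part n x j + clausen_poly_deriv_part n x (j-1))))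
          (at x)"
    unfolding clausen_poly_def[abs_def]
    by (intro DERIV_sum DERIV_cmult has_real_derivative_clausen_poly_summand[OF x]) auto
  also have "(\<Sum>j=1..n. (-1)^j * (clausen_poly_deriv_part n x j + clausen_poly_deriv_part n x (j-1)))
               = (\<Sum>j=1..n. E j - E (j-1))"
  proof (rule sum.cong[OF refl])
    fix j
    assume "j \<in> {1..n}"
    then obtain i where "j = Suc i"
      by (cases j) auto
    then show "(-1)^j * (clausen_poly_deriv_part n x j + clausen_poly_deriv_part n x (j-1))
                 = E j - E (j-1)"
      by (simp add: E_def algebra_simps)
  qed
  also have "\<dots> = E n - E 0"
    by (induction n) (auto simp: sum.atLeast_Suc_atMost)
  also have "\<dots> = - (x^(2*n-1) * cot (x/2) / (2 * fact (2*n-1)))"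
    using n by (simp add: E_def clausen_poly_deriv_part_def)
  finally show ?thesis .
qed

lemma tendsto_mult_clausen_1: "((\<lambda>x. x * clausen 1 x) \<longlongrightarrow> 0) (at_right 0)"
proof -
  have "((\<lambda>x::real. - (x * ln (2 * sin (x/2)))) \<longlongrightarrow> 0) (at_right 0)"
    by real_asymp
  moreover have "\<forall>\<^sub>F x in at_right 0. x < 2*pi"
    unfolding eventually_at_right_field by (intro exI[of _ "2*pi"]) auto
  then have "\<forall>\<^sub>F x in at_right 0. - (x * ln (2 * sin (x/2))) = x * clausen 1 x"
    using eventually_at_right_less
  proof eventually_elim
    case (elim x)
    then have "sin (x/2) > 0"
      by (intro sin_gt_zero) auto
    then show ?case
      by (simp add: clausen_def)
  qed
  ultimately show ?thesis
    by (rule Lim_transform_eventually)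
qed

lemma tendsto_clausen:
  assumes "k \<ge> 2"
  shows "(clausen k \<longlongrightarrow> clausen k x) (at x within S)"
  by (rule tendsto_within_subset[of _ _ _ UNIV])
     (use continuous_on_clausen[OF assms] in \<open>auto simp: continuous_on_def\<close>)

lemma clausen_poly_tendsto_0:
  assumes "n \<ge> 1"
  shows "(clausen_poly n \<longlongrightarrow> 0) (at_right 0)"
proof -
  have "((\<lambda>x. (-1)^j * (x^(2*n-2*j) * clausen (2*j) x / fact (2*n-2*j)
                 - x^(2*n+1-2*j) * clausen (2*j-1) x / fact (2*n+1-2*j))) \<longlongrightarrow> 0) (at_right 0)"
    if j: "j \<in> {1..n}" for j
  proof -
    have "((\<lambda>x. x^(2*n-2*j) * clausen (2*j) x / fact (2*n-2*j))
            \<longlongrightarrow> 0^(2*n-2*j) * clausen (2*j) 0 / fact (2*n-2*j)) (at_right 0)"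
      using j by (intro tendsto_intros tendsto_clausen) auto
    moreover have "clausen (2*j) 0 = 0"
      using j by (simp add: clausen_even_eq)
    ultimately have even_part:
      "((\<lambda>x. x^(2*n-2*j) * clausen (2*j) x / fact (2*n-2*j)) \<longlongrightarrow> 0) (at_right 0)"
      by simp
    have odd_part: "((\<lambda>x. x^(2*n+1-2*j) * clausen (2*j-1) x / fact (2*n+1-2*j)) \<longlongrightarrow> 0) (at_right 0)"
    proof (cases "j = 1")
      case True
      then have "2*n+1-2*j = Suc (2*n-2)" "2*j-1 = 1"
        using assms by auto
      then have "x^(2*n+1-2*j) * clausen (2*j-1) x = x^(2*n-2) * (x * clausen 1 x)" for x :: real
        by (simp only: power_Suc mult_ac)
      moreover have "((\<lambda>x. x^(2*n-2) * (x * clausen 1 x) / fact (2*n+1-2*j))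
                        \<longlongrightarrow> 0^(2*n-2) * 0 / fact (2*n+1-2*j)) (at_right 0)"
        by (intro tendsto_intros tendsto_mult_clausen_1) simp
      ultimately show ?thesis
        by simp
    next
      case False
      then have "2*j-1 \<ge> 2" "2*n+1-2*j \<noteq> 0"
        using j by auto
      moreover have "((\<lambda>x. x^(2*n+1-2*j) * clausen (2*j-1) x / fact (2*n+1-2*j))
          \<longlongrightarrow> 0^(2*n+1-2*j) * clausen (2*j-1) 0 / fact (2*n+1-2*j)) (at_right 0)"
        using \<open>2*j-1 \<ge> 2\<close> by (intro tendsto_intros tendsto_clausen) auto
      ultimately show ?thesis
        by (simp add: zero_power)
    qed
    show ?thesis
      using tendsto_mult_right_zero[OF tendsto_diff[OF even_part odd_part, simplified]] by simp
  qed
  then show ?thesis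
    unfolding clausen_poly_def[abs_def] by (rule tendsto_null_sum)
qed

section \<open>Termwise integration of the zeta series\<close>

definition zeta_primitive_term :: "nat \<Rightarrow> nat \<Rightarrow> real \<Rightarrow> real" where
  "zeta_primitive_term m k y =
     rzeta (real (2 * Suc k)) / (real (Suc k) * real (2 * Suc k + 2*m + 1)) * y ^ (2 * Suc k + 2*m + 1)"

lemma zeta_primitive_series_has_real_derivative:
  assumes y: "\<bar>y\<bar> < 1"
  shows "summable (\<lambda>k. zeta_primitive_term m k y)"
    and "((\<lambda>y. \<Sum>k. zeta_primitive_term m k y) has_real_derivative
           (\<Sum>k. y^(2*m) * (rzeta (real (2 * Suc k)) * y ^ (2 * Suc k) / real (Suc k)))) (at y)"
proof -
  define \<rho> where "\<rho> = (1 + \<bar>y\<bar>) / 2"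
  have \<rho>: "0 < \<rho>" "\<rho> < 1" "\<bar>y\<bar> < \<rho>"
    using y by (auto simp: \<rho>_def)
  have deriv: "(zeta_primitive_term m k has_real_derivative
          x^(2*m) * (rzeta (real (2 * Suc k)) * x ^ (2 * Suc k) / real (Suc k))) (at x within S)"
    for k x S
  proof -
    have "(zeta_primitive_term m k has_real_derivative
            rzeta (real (2 * Suc k)) / (real (Suc k) * real (2 * Suc k + 2*m + 1))
              * (real (2 * Suc k + 2*m + 1) * x ^ (2 * Suc k + 2*m))) (at x within S)"
      unfolding zeta_primitive_term_def[abs_def] by (rule derivative_eq_intros refl)+ simp
    then show ?thesis
      by (simp add: power_add field_simps del: of_nat_Suc of_nat_add)
  qed
  have uniform: "uniformly_convergent_on (ball 0 \<rho>)
      (\<lambda>n x. \<Sum>k<n. x^(2*m) * (rzeta (real (2 * Suc k)) * x ^ (2 * Suc k) / real (Suc k)))"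
  proof (rule Weierstrass_m_test'[where M="\<lambda>k. 3 * \<rho>^k"])
    fix k :: nat and x :: real
    assume "x \<in> ball 0 \<rho>"
    then have "\<bar>x\<bar>^(2*m) * \<bar>x\<bar>^(2 * Suc k) \<le> 1 * \<rho>^k"
      using \<rho> power_le_one[of "\<bar>x\<bar>" "2*m"] power_mono[of "\<bar>x\<bar>" \<rho> "2 * Suc k"]
        power_decreasing[of k "2 * Suc k" \<rho>]
      by (intro mult_mono) auto
    moreover have "0 \<le> rzeta (real (2 * Suc k))" "rzeta (real (2 * Suc k)) \<le> 3"
      using rzeta_even_bounds[of "Suc k"] by auto
    ultimately have "rzeta (real (2 * Suc k)) / real (Suc k) * (\<bar>x\<bar>^(2*m) * \<bar>x\<bar>^(2 * Suc k))
                       \<le> 3 / 1 * \<rho>^k"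
      by (intro mult_mono frac_le) auto
    then show "norm (x^(2*m) * (rzeta (real (2 * Suc k)) * x ^ (2 * Suc k) / real (Suc k)))
                 \<le> 3 * \<rho>^k"
      using \<open>0 \<le> rzeta (real (2 * Suc k))\<close> by (simp add: abs_mult power_abs mult_ac)
  qed (use \<rho> in \<open>simp add: summable_geometric\<close>)
  have "summable (\<lambda>k. zeta_primitive_term m k 0)"
    by (simp add: zeta_primitive_term_def)
  from has_field_derivative_series'[OF convex_ball deriv uniform _ this]
  show "summable (\<lambda>k. zeta_primitive_term m k y)"
    and "((\<lambda>y. \<Sum>k. zeta_primitive_term m k y) has_real_derivative
           (\<Sum>k. y^(2*m) * (rzeta (real (2 * Suc k)) * y ^ (2 * Suc k) / real (Suc k)))) (at y)"
    using \<rho> by auto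
qed

text \<open>The primitive of \<open>y\<^sup>2\<^sup>m ln (\<pi> y / sin (\<pi> y))\<close> vanishing at \<open>0\<close>, found by integrating by parts:
  the remaining integral of \<open>y\<^sup>2\<^sup>m\<^sup>+\<^sup>1 \<pi> cot (\<pi> y)\<close> is a rescaled \<^const>\<open>clausen_poly\<close>.\<close>

definition zeta_primitive :: "nat \<Rightarrow> real \<Rightarrow> real" where
  "zeta_primitive m y =
     y^(2*m+1) * (- 1 / (2 * real m + 1)^2 + 1 / (2 * real m + 1) * ln (pi * y / sin (pi * y)))
     - fact (2*m) / (2*pi)^(2*m+1) * clausen_poly (Suc m) (2*pi*y)"

lemma has_real_derivative_zeta_primitive:
  assumes y: "0 < y" "y < 1"
  shows "(zeta_primitive m has_real_derivative y^(2*m) * ln (pi * y / sin (pi * y))) (at y)"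
proof -
  define N where "N = 2 * real m + 1"
  define K :: real where "K = (2*pi)^(2*m+1)"
  define F :: real where "F = fact (2*m)"
  define l where "l = ln (pi * y / sin (pi * y))"
  have sin_pos: "sin (pi * y) > 0"
    using y by (intro sin_gt_zero) auto
  have "0 < 2*pi*y" "2*pi*y < 2*pi"
    using y by auto
  from has_real_derivative_clausen_poly[OF this, of "Suc m"]
  have "(clausen_poly (Suc m) has_real_derivative
          - ((2*pi*y)^(2*m+1) * cot (pi*y) / (2 * fact (2*m+1)))) (at (2*pi*y))"
    by simp
  moreover have "((\<lambda>y. 2*pi*y) has_real_derivative 2*pi) (at y)"
    by (auto intro!: derivative_eq_intros)
  ultimately have T: "((\<lambda>y. clausen_poly (Suc m) (2*pi*y)) has_real_derivative
          - ((2*pi*y)^(2*m+1) * cot (pi*y) / (2 * fact (2*m+1))) * (2*pi)) (at y)"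
    by (rule DERIV_chain2)
  have L: "((\<lambda>y. ln (pi * y / sin (pi * y))) has_real_derivative 1/y - pi * cot (pi * y)) (at y)"
    using sin_pos y
    by (auto intro!: derivative_eq_intros simp: cot_def field_simps power2_eq_square)
  have "zeta_primitive m = (\<lambda>y. y^(2*m+1) * (- 1 / N^2 + 1 / N * ln (pi * y / sin (pi * y)))
                               - F / K * clausen_poly (Suc m) (2*pi*y))"
    by (simp add: fun_eq_iff zeta_primitive_def N_def K_def F_def)
  moreover note DERIV_diff[OF DERIV_mult[OF DERIV_pow[of "2*m+1" y]
      DERIV_add[OF DERIV_const[of "- 1 / N^2"] DERIV_cmult[OF L, of "1/N"]]]
      DERIV_cmult[OF T, of "F / K"]]
  moreover have "real (2*m+1) * y^(2*m+1 - Suc 0) * (- 1 / N^2 + 1 / N * l)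
        + (0 + 1 / N * (1/y - pi * cot (pi * y))) * y^(2*m+1)
        - F / K * (- ((2*pi*y)^(2*m+1) * cot (pi*y) / (2 * fact (2*m+1))) * (2*pi))
      = y^(2*m) * l"
  proof -
    have "real (2*m+1) = N" "fact (2*m+1) = N * F" "(2*pi*y)^(2*m+1) = K * (y * y^(2*m))"
      "y^(2*m+1) = y * y^(2*m)"
      by (simp_all add: N_def K_def F_def fact_Suc power_mult_distrib)
    moreover have "N > 0" "K > 0" "F > 0"
      by (simp_all add: N_def K_def F_def)
    ultimately show ?thesis
      using y by (simp add: field_simps power2_eq_square)
  qed
  ultimately show ?thesis
    unfolding l_def by simp
qed

lemma zeta_primitive_tendsto_0: "(zeta_primitive m \<longlongrightarrow> 0) (at_right 0)"
proof -
  have "((\<lambda>y::real. ln (pi * y / sin (pi * y))) \<longlongrightarrow> 0) (at_right 0)"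
    by real_asymp
  moreover have "((\<lambda>y. clausen_poly (Suc m) (2*pi*y)) \<longlongrightarrow> 0) (at_right 0)"
    by (rule filterlim_compose[OF clausen_poly_tendsto_0]) (simp, real_asymp)
  ultimately have "(zeta_primitive m \<longlongrightarrow>
      0^(2*m+1) * (- 1 / (2 * real m + 1)^2 + 1 / (2 * real m + 1) * 0)
      - fact (2*m) / (2*pi)^(2*m+1) * 0) (at_right 0)"
    unfolding zeta_primitive_def[abs_def] by (intro tendsto_intros)
  then show ?thesis
    by simp
qed

lemma zeta_primitive_series_eq:
  assumes y: "0 < y" "y < 1"
  shows "(\<Sum>k. zeta_primitive_term m k y) = zeta_primitive m y"
proof -
  define Q where "Q t = (\<Sum>k. zeta_primitive_term m k t) - zeta_primitive m t" for t
  have "DERIV Q t :> 0" if "t \<in> {0<..<1}" for t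
  proof -
    have t: "0 < \<bar>t\<bar>" "\<bar>t\<bar> < 1" "0 < t" "t < 1"
      using that by auto
    have "(\<Sum>k. t^(2*m) * (rzeta (real (2 * Suc k)) * t ^ (2 * Suc k) / real (Suc k)))
            = t^(2*m) * ln (pi * t / sin (pi * t))"
      using sums_mult[OF sums_rzeta_ln_sin[OF t(1,2)]] by (simp add: sums_iff)
    then show ?thesis
      unfolding Q_def[abs_def]
      using DERIV_diff[OF zeta_primitive_series_has_real_derivative(2)[OF t(2), of m]
                          has_real_derivative_zeta_primitive[OF t(3,4), of m]]
      by simp
  qed
  then have const: "Q t = Q y" if "t \<in> {0<..<1}" for t
    using that y by (intro DERIV_isconst3[of 0 1]) auto
  have "isCont (\<lambda>y. \<Sum>k. zeta_primitive_term m k y) 0"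
    by (rule DERIV_isCont[OF zeta_primitive_series_has_real_derivative(2)]) simp
  then have "((\<lambda>y. \<Sum>k. zeta_primitive_term m k y) \<longlongrightarrow> 0) (at_right 0)"
    by (simp add: isCont_def filterlim_at_split zeta_primitive_term_def)
  then have lim_0: "(Q \<longlongrightarrow> 0) (at_right 0)"
    unfolding Q_def[abs_def] using tendsto_diff[OF _ zeta_primitive_tendsto_0] by fastforce
  have lim_Q: "(Q \<longlongrightarrow> Q y) (at_right 0)"
    using const by (intro tendsto_eventually) (auto simp: eventually_at_right_field intro!: exI[of _ 1])
  have "Q y = 0"
    using tendsto_unique[OF _ lim_Q lim_0] by simp
  then show ?thesis
    by (simp add: Q_def)
qed

definition zeta_term :: "nat \<Rightarrow> real \<Rightarrow> nat \<Rightarrow> real" where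
  "zeta_term n y k = rzeta (real (2*k)) * y^(2*k) / (real k * real (2*k - 1 + 2*n))"

definition zeta_series_closed :: "nat \<Rightarrow> real \<Rightarrow> real" where
  "zeta_series_closed n y =
     - 1 / (2 * real n - 1)^2 + 1 / (2 * real n - 1) * ln (pi * y / sin (pi * y))
     - fact (2*n-2) * clsum n (2 * pi * y)"

lemma zeta_primitive_eq_closed:
  assumes "y \<noteq> 0"
  shows "zeta_primitive m y = y^(2*m+1) * zeta_series_closed (Suc m) y"
proof -
  have "clausen_poly (Suc m) (2*pi*y) = (2*pi)^(2*m+1) * y^(2*m+1) * clsum (Suc m) (2*pi*y)"
    using clausen_poly_eq_clsum[of "2*pi*y" "Suc m"] assms by (simp add: power_mult_distrib)
  moreover have "2 * real (Suc m) - 1 = 2 * real m + 1"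
    by simp
  ultimately show ?thesis
    by (simp add: zeta_primitive_def zeta_series_closed_def algebra_simps)
qed

lemma sums_zeta_term_pos:
  assumes y: "0 < y" "y < 1"
  shows "(\<lambda>k. zeta_term (Suc m) y (Suc k)) sums zeta_series_closed (Suc m) y"
proof -
  have y_pow: "y^(2*m+1) > 0"
    using y by simp
  have "(\<lambda>k. zeta_primitive_term m k y) sums zeta_primitive m y"
    using zeta_primitive_series_has_real_derivative(1)[of y m] zeta_primitive_series_eq[OF y, of m] y
    by (simp add: sums_iff)
  moreover have "zeta_primitive_term m k y = y^(2*m+1) * zeta_term (Suc m) y (Suc k)" for k
  proof -
    have "2 * Suc k - 1 + 2 * Suc m = 2 * Suc k + 2*m + 1"
      by simp
    then show ?thesis
      by (simp add: zeta_primitive_term_def zeta_term_def power_add field_simps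
               del: of_nat_Suc of_nat_add)
  qed
  ultimately have "(\<lambda>k. y^(2*m+1) * zeta_term (Suc m) y (Suc k))
                     sums (y^(2*m+1) * zeta_series_closed (Suc m) y)"
    using zeta_primitive_eq_closed[of y m] y by simp
  then show ?thesis
    using y_pow by (subst (asm) sums_mult_iff) auto
qed

lemma sums_zeta_term:
  assumes n: "n \<ge> 1" and y: "0 < \<bar>y\<bar>" "\<bar>y\<bar> < 1"
  shows "(\<lambda>k. zeta_term n y (Suc k)) sums zeta_series_closed n y"
proof -
  obtain m where m: "n = Suc m"
    using n by (cases n) auto
  have "zeta_term n (-y) k = zeta_term n y k" for k
    by (simp add: zeta_term_def power_mult[symmetric] power_mult_distrib)
  moreover have "zeta_series_closed n (-y) = zeta_series_closed n y"
    using clsum_minus[of n "2*pi*y"] by (simp add: zeta_series_closed_def)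
  moreover have "(\<lambda>k. zeta_term n \<bar>y\<bar> (Suc k)) sums zeta_series_closed n \<bar>y\<bar>"
    using sums_zeta_term_pos[of "\<bar>y\<bar>" m] y m by simp
  ultimately show ?thesis
    by (cases "y \<ge> 0") auto
qed

section \<open>Fibonacci and Lucas numbers\<close>

lemma sqrt5_bounds: "2 < sqrt (5::real)" "sqrt (5::real) < 3"
  by (simp_all add: real_less_rsqrt real_less_lsqrt)

lemma gr_alpha_gt_1: "1 < gr_alpha"
  using sqrt5_bounds by (simp add: gr_alpha_def)

lemma gr_beta_bounds: "-1 < gr_beta" "gr_beta < 0"
  using sqrt5_bounds by (simp_all add: gr_beta_def)

lemma gr_alpha_mult_beta: "gr_alpha * gr_beta = -1"
  by (simp add: gr_alpha_def gr_beta_def field_simps)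

lemma gr_squares: "gr_alpha^2 = gr_alpha + 1" "gr_beta^2 = gr_beta + 1"
  by (simp_all add: gr_alpha_def gr_beta_def field_simps power2_eq_square)

lemma fib_closed_form_gr: "real (fib n) = (gr_alpha ^ n - gr_beta ^ n) / sqrt 5"
  unfolding gr_alpha_def gr_beta_def by (rule fib_closed_form)

lemma lucas_closed_form: "real (lucas n) = gr_alpha ^ n + gr_beta ^ n"
proof (induction n rule: lucas.induct)
  case 2
  then show ?case
    by (simp add: gr_alpha_def gr_beta_def add_divide_distrib[symmetric])
next
  case (3 n)
  have "gr_alpha ^ Suc (Suc n) + gr_beta ^ Suc (Suc n) = gr_alpha^n * gr_alpha^2 + gr_beta^n * gr_beta^2"
    by (simp add: power2_eq_square algebra_simps)
  also have "\<dots> = (gr_alpha ^ Suc n + gr_beta ^ Suc n) + (gr_alpha ^ n + gr_beta ^ n)"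
    by (simp add: gr_squares algebra_simps)
  finally show ?case
    using 3 by simp
qed simp

lemma fib_le_gr_alpha_power: "real (fib m) \<le> gr_alpha ^ m"
proof -
  have "\<bar>gr_beta ^ m\<bar> \<le> 1" "1 \<le> gr_alpha ^ m"
    using gr_alpha_gt_1 gr_beta_bounds by (simp_all add: power_abs power_le_one one_le_power)
  then have "gr_alpha ^ m - gr_beta ^ m \<le> 2 * gr_alpha ^ m"
    by linarith
  also have "\<dots> \<le> sqrt 5 * gr_alpha ^ m"
    using sqrt5_bounds \<open>1 \<le> gr_alpha ^ m\<close> by (intro mult_right_mono) auto
  finally show ?thesis
    using sqrt5_bounds by (simp add: fib_closed_form_gr divide_le_eq mult.commute)
qed

lemma lucas_le_gr_alpha_power: "real (lucas m) \<le> 2 * gr_alpha ^ m"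
proof -
  have "\<bar>gr_beta ^ m\<bar> \<le> 1" "1 \<le> gr_alpha ^ m"
    using gr_alpha_gt_1 gr_beta_bounds by (simp_all add: power_abs power_le_one one_le_power)
  then show ?thesis
    unfolding lucas_closed_form by linarith
qed

lemma fterm_eq_zeta_term_diff:
  "sqrt 5 * fterm n z k = zeta_term n (gr_alpha * z) k - zeta_term n (gr_beta * z) k"
proof -
  have split: "s * ((a - b) / s * r * w / D) = r * (a * w) / D - r * (b * w) / D"
    if "s \<noteq> 0" for s a b r w D :: real
    using that by (cases "D = 0") (simp_all add: field_simps)
  show ?thesis
    unfolding fterm_def zeta_term_def fib_closed_form_gr power_mult_distrib by (rule split) simp
qed

lemma lterm_eq_zeta_term_add:
  "lterm n z k = zeta_term n (gr_alpha * z) k + zeta_term n (gr_beta * z) k"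
  by (simp add: lterm_def zeta_term_def lucas_closed_form power_mult_distrib add_divide_distrib
                algebra_simps)

lemma abs_gr_mult_bounds:
  assumes z: "0 < \<bar>z\<bar>" "\<bar>z\<bar> < 1 / gr_alpha"
  shows "0 < \<bar>gr_alpha * z\<bar>" "\<bar>gr_alpha * z\<bar> < 1" "0 < \<bar>gr_beta * z\<bar>" "\<bar>gr_beta * z\<bar> < 1"
proof -
  have "\<bar>gr_alpha * z\<bar> < 1"
    using z gr_alpha_gt_1 by (simp add: abs_mult field_simps)
  moreover have "\<bar>gr_beta\<bar> * \<bar>z\<bar> \<le> \<bar>gr_alpha\<bar> * \<bar>z\<bar>"
    using gr_alpha_gt_1 gr_beta_bounds by (intro mult_right_mono) auto
  then have "\<bar>gr_beta * z\<bar> \<le> \<bar>gr_alpha * z\<bar>"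
    by (simp add: abs_mult)
  ultimately show "\<bar>gr_alpha * z\<bar> < 1" "\<bar>gr_beta * z\<bar> < 1"
    by simp_all
  have "gr_alpha \<noteq> 0" "gr_beta \<noteq> 0"
    using gr_alpha_gt_1 gr_beta_bounds by auto
  then show "0 < \<bar>gr_alpha * z\<bar>" "0 < \<bar>gr_beta * z\<bar>"
    using z by (simp_all add: abs_mult)
qed

lemma zeta_series_closed_gr:
  assumes z: "0 < \<bar>z\<bar>" "\<bar>z\<bar> < 1 / gr_alpha"
  shows "zeta_series_closed n (gr_alpha * z) - zeta_series_closed n (gr_beta * z) = RHS_F n z"
    and "zeta_series_closed n (gr_alpha * z) + zeta_series_closed n (gr_beta * z) = RHS_L n z"
proof -
  define a where "a = pi * (gr_alpha * z) / sin (pi * (gr_alpha * z))"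
  define b where "b = pi * (gr_beta * z) / sin (pi * (gr_beta * z))"
  have "a > 0" "b > 0"
    using sin_pi_divide_pos[OF abs_gr_mult_bounds(1,2)[OF z]]
      sin_pi_divide_pos[OF abs_gr_mult_bounds(3,4)[OF z]]
    by (auto simp: a_def b_def zero_less_divide_iff)
  then have nonzero: "sin (pi * gr_alpha * z) \<noteq> 0" "sin (pi * gr_beta * z) \<noteq> 0" "z \<noteq> 0"
    by (auto simp: a_def b_def mult.assoc)
  have "a / b = gr_alpha / gr_beta * sin (pi * gr_beta * z) / sin (pi * gr_alpha * z)"
    using nonzero gr_beta_bounds by (simp add: a_def b_def field_simps mult.assoc)
  moreover have "gr_alpha / gr_beta = - (gr_alpha ^ 2)"
    using gr_alpha_mult_beta gr_beta_bounds by (simp add: field_simps power2_eq_square)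
  moreover have "a * b = (gr_alpha * gr_beta) * (pi ^ 2 * z ^ 2)
                           / (sin (pi * gr_alpha * z) * sin (pi * gr_beta * z))"
    by (simp add: a_def b_def field_simps power2_eq_square mult.assoc)
  ultimately have ratio: "a / b = - (gr_alpha ^ 2) * sin (pi * gr_beta * z) / sin (pi * gr_alpha * z)"
    and product: "a * b = - (pi ^ 2 * z ^ 2) / (sin (pi * gr_alpha * z) * sin (pi * gr_beta * z))"
    using gr_alpha_mult_beta by simp_all
  define N where "N = 2 * real n - 1"
  define c :: real where "c = fact (2*n-2)"
  have "zeta_series_closed n (gr_alpha * z) = - 1 / N^2 + 1 / N * ln a - c * clsum n (2*pi*gr_alpha*z)"
    "zeta_series_closed n (gr_beta * z) = - 1 / N^2 + 1 / N * ln b - c * clsum n (2*pi*gr_beta*z)"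
    by (simp_all add: zeta_series_closed_def a_def b_def N_def c_def mult.assoc)
  moreover have "RHS_F n z = 1 / N * ln (a / b) - c * clsum n (2*pi*gr_alpha*z) + c * clsum n (2*pi*gr_beta*z)"
    unfolding RHS_F_def ratio N_def c_def ..
  moreover have "RHS_L n z = - 2 / N^2 + 1 / N * ln (a * b)
                               - c * clsum n (2*pi*gr_alpha*z) - c * clsum n (2*pi*gr_beta*z)"
    unfolding RHS_L_def product N_def c_def ..
  moreover have "ln (a / b) = ln a - ln b" "ln (a * b) = ln a + ln b"
    using \<open>a > 0\<close> \<open>b > 0\<close> by (simp_all add: ln_div ln_mult)
  ultimately show "zeta_series_closed n (gr_alpha * z) - zeta_series_closed n (gr_beta * z) = RHS_F n z"
    and "zeta_series_closed n (gr_alpha * z) + zeta_series_closed n (gr_beta * z) = RHS_L n z"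
    by (simp_all add: algebra_simps)
qed

lemma sums_fterm_lterm:
  assumes n: "n \<ge> 1" and z: "0 < \<bar>z\<bar>" "\<bar>z\<bar> < 1 / gr_alpha"
  shows "(\<lambda>k. sqrt 5 * fterm n z (Suc k)) sums RHS_F n z"
    and "(\<lambda>k. lterm n z (Suc k)) sums RHS_L n z"
proof -
  note sums_alpha = sums_zeta_term[OF n abs_gr_mult_bounds(1,2)[OF z]]
  note sums_beta = sums_zeta_term[OF n abs_gr_mult_bounds(3,4)[OF z]]
  show "(\<lambda>k. sqrt 5 * fterm n z (Suc k)) sums RHS_F n z"
    unfolding fterm_eq_zeta_term_diff zeta_series_closed_gr(1)[OF z, symmetric]
    by (rule sums_diff[OF sums_alpha sums_beta])
  show "(\<lambda>k. lterm n z (Suc k)) sums RHS_L n z"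
    unfolding lterm_eq_zeta_term_add zeta_series_closed_gr(2)[OF z, symmetric]
    by (rule sums_add[OF sums_alpha sums_beta])
qed

lemma norm_zeta_series_term_le:
  assumes "n \<ge> 1" "0 \<le> c" "c * \<bar>w\<bar>^(2 * Suc k) \<le> C"
  shows "norm (c * rzeta (real (2 * Suc k)) * w^(2 * Suc k)
                 / (real (Suc k) * real (2 * Suc k - 1 + 2*n))) \<le> 3 * C / real (Suc k)^2"
proof -
  have zeta: "0 \<le> rzeta (real (2 * Suc k))" "rzeta (real (2 * Suc k)) \<le> 3"
    using rzeta_even_bounds[of "Suc k"] by auto
  have "real (Suc k) \<le> real (2 * Suc k - 1 + 2*n)"
    using assms(1) by simp
  moreover have "0 \<le> C"
    using assms(2,3) by (smt (verit) zero_le_mult_iff zero_le_power abs_ge_zero)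
  moreover have "norm (c * rzeta (real (2 * Suc k)) * w^(2 * Suc k)
                   / (real (Suc k) * real (2 * Suc k - 1 + 2*n)))
      = (c * \<bar>w\<bar>^(2 * Suc k)) * rzeta (real (2 * Suc k)) / (real (Suc k) * real (2 * Suc k - 1 + 2*n))"
    using assms(2) zeta by (simp add: abs_mult power_abs abs_divide mult_ac del: of_nat_Suc)
  ultimately have "norm (c * rzeta (real (2 * Suc k)) * w^(2 * Suc k)
                   / (real (Suc k) * real (2 * Suc k - 1 + 2*n))) \<le> C * 3 / (real (Suc k) * real (Suc k))"
    using assms zeta by (auto intro!: frac_le mult_mono simp del: of_nat_Suc)
  then show ?thesis
    by (simp add: power2_eq_square mult.commute)
qed

lemma norm_fterm_lterm_le:
  assumes n: "n \<ge> 1" and w: "\<bar>w\<bar> \<le> 1 / gr_alpha"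
  shows "norm (fterm n w (Suc k)) \<le> 3 / real (Suc k)^2"
    and "norm (lterm n w (Suc k)) \<le> 6 / real (Suc k)^2"
proof -
  have alpha: "gr_alpha > 0"
    using gr_alpha_gt_1 by simp
  have w_pow: "\<bar>w\<bar>^(2 * Suc k) \<le> (1 / gr_alpha)^(2 * Suc k)"
    using w by (intro power_mono) auto
  have cancel: "gr_alpha^(2 * Suc k) * (1 / gr_alpha)^(2 * Suc k) = 1"
    using alpha by (simp add: power_one_over field_simps)
  have "real (fib (2 * Suc k)) * \<bar>w\<bar>^(2 * Suc k) \<le> gr_alpha^(2 * Suc k) * (1 / gr_alpha)^(2 * Suc k)"
    using alpha by (intro mult_mono[OF fib_le_gr_alpha_power w_pow]) auto
  then have "real (fib (2 * Suc k)) * \<bar>w\<bar>^(2 * Suc k) \<le> 1"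
    unfolding cancel .
  from norm_zeta_series_term_le[OF n _ this]
  show "norm (fterm n w (Suc k)) \<le> 3 / real (Suc k)^2"
    by (simp add: fterm_def)
  have "real (lucas (2 * Suc k)) * \<bar>w\<bar>^(2 * Suc k)
          \<le> 2 * (gr_alpha^(2 * Suc k) * (1 / gr_alpha)^(2 * Suc k))"
    using alpha by (subst mult.assoc[symmetric], intro mult_mono[OF lucas_le_gr_alpha_power w_pow]) auto
  then have "real (lucas (2 * Suc k)) * \<bar>w\<bar>^(2 * Suc k) \<le> 2"
    unfolding cancel by simp
  from norm_zeta_series_term_le[OF n _ this]
  show "norm (lterm n w (Suc k)) \<le> 6 / real (Suc k)^2"
    by (simp add: lterm_def)
qed

lemma summable_const_divide_Suc_square: "summable (\<lambda>k. c / real (Suc k)^2)"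
  using summable_mult[OF summable_inverse_power_Suc[OF order_refl], of c] by simp

lemma continuous_on_fterm_lterm_series:
  assumes n: "n \<ge> 1"
  shows "continuous_on (cball 0 (1/gr_alpha)) (\<lambda>w. \<Sum>k. fterm n w (Suc k))"
    and "continuous_on (cball 0 (1/gr_alpha)) (\<lambda>w. \<Sum>k. lterm n w (Suc k))"
proof -
  have "uniform_limit (cball 0 (1/gr_alpha))
          (\<lambda>m w. \<Sum>k<m. fterm n w (Suc k)) (\<lambda>w. \<Sum>k. fterm n w (Suc k)) sequentially"
    by (rule Weierstrass_m_test[OF _ summable_const_divide_Suc_square])
       (use norm_fterm_lterm_le(1)[OF n] in auto)
  then show "continuous_on (cball 0 (1/gr_alpha)) (\<lambda>w. \<Sum>k. fterm n w (Suc k))"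
    by (rule uniform_limit_theorem[rotated])
       (auto intro!: always_eventually continuous_intros simp: fterm_def)
  have "uniform_limit (cball 0 (1/gr_alpha))
          (\<lambda>m w. \<Sum>k<m. lterm n w (Suc k)) (\<lambda>w. \<Sum>k. lterm n w (Suc k)) sequentially"
    by (rule Weierstrass_m_test[OF _ summable_const_divide_Suc_square])
       (use norm_fterm_lterm_le(2)[OF n] in auto)
  then show "continuous_on (cball 0 (1/gr_alpha)) (\<lambda>w. \<Sum>k. lterm n w (Suc k))"
    by (rule uniform_limit_theorem[rotated])
       (auto intro!: always_eventually continuous_intros simp: lterm_def)
qed

lemma fterm_lterm_boundary:
  assumes n: "n \<ge> 1" and z: "\<bar>z\<bar> = 1 / gr_alpha"
  defines "S \<equiv> {w. 0 < \<bar>w\<bar> \<and> \<bar>w\<bar> < 1 / gr_alpha}"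
  shows "summable (\<lambda>k. fterm n z (Suc k))" "summable (\<lambda>k. lterm n z (Suc k))"
    and "(RHS_F n \<longlongrightarrow> sqrt 5 * (\<Sum>k. fterm n z (Suc k))) (at z within S)"
    and "(RHS_L n \<longlongrightarrow> (\<Sum>k. lterm n z (Suc k))) (at z within S)"
proof -
  have summable: "summable (\<lambda>k. fterm n w (Suc k))" "summable (\<lambda>k. lterm n w (Suc k))"
    if "\<bar>w\<bar> \<le> 1 / gr_alpha" for w
    by (rule summable_comparison_test'[OF summable_const_divide_Suc_square],
        use norm_fterm_lterm_le[OF n that] in blast)+
  then show "summable (\<lambda>k. fterm n z (Suc k))" "summable (\<lambda>k. lterm n z (Suc k))"
    using z by auto
  have "z \<in> cball 0 (1/gr_alpha)" "S \<subseteq> cball 0 (1/gr_alpha)"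
    using z by (auto simp: S_def)
  then have lim_F: "((\<lambda>w. \<Sum>k. fterm n w (Suc k)) \<longlongrightarrow> (\<Sum>k. fterm n z (Suc k))) (at z within S)"
    and lim_L: "((\<lambda>w. \<Sum>k. lterm n w (Suc k)) \<longlongrightarrow> (\<Sum>k. lterm n z (Suc k))) (at z within S)"
    using continuous_on_fterm_lterm_series[OF n]
    unfolding continuous_on_def by (blast intro: tendsto_within_subset)+
  have "\<forall>\<^sub>F w in at z within S. sqrt 5 * (\<Sum>k. fterm n w (Suc k)) = RHS_F n w
                                  \<and> (\<Sum>k. lterm n w (Suc k)) = RHS_L n w"
    unfolding eventually_at_filter
  proof (intro always_eventually allI impI)
    fix w
    assume "w \<in> S"
    then have w: "0 < \<bar>w\<bar>" "\<bar>w\<bar> < 1 / gr_alpha"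
      by (auto simp: S_def)
    show "sqrt 5 * (\<Sum>k. fterm n w (Suc k)) = RHS_F n w \<and> (\<Sum>k. lterm n w (Suc k)) = RHS_L n w"
      using sums_fterm_lterm[OF n w] suminf_mult[OF summable(1), of w "sqrt 5"] w
      by (simp add: sums_iff)
  qed
  then have "\<forall>\<^sub>F w in at z within S. sqrt 5 * (\<Sum>k. fterm n w (Suc k)) = RHS_F n w"
    and "\<forall>\<^sub>F w in at z within S. (\<Sum>k. lterm n w (Suc k)) = RHS_L n w"
    by (auto simp: eventually_conj_iff)
  then show "(RHS_F n \<longlongrightarrow> sqrt 5 * (\<Sum>k. fterm n z (Suc k))) (at z within S)"
    and "(RHS_L n \<longlongrightarrow> (\<Sum>k. lterm n z (Suc k))) (at z within S)"
    by (auto intro: Lim_transform_eventually[OF tendsto_mult_left[OF lim_F]]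
                    Lim_transform_eventually[OF lim_L])
qed

theorem theorem19:
  fixes n :: nat
  assumes "n \<ge> 1"
  shows "(\<forall>z::real. 0 < \<bar>z\<bar> \<and> \<bar>z\<bar> < 1 / gr_alpha \<longrightarrow>
            ((\<lambda>k. sqrt 5 * fterm n z (Suc k)) sums RHS_F n z) \<and>
            ((\<lambda>k. lterm n z (Suc k)) sums RHS_L n z))
       \<and> (\<forall>z::real. \<bar>z\<bar> = 1 / gr_alpha \<longrightarrow>
            summable (\<lambda>k. fterm n z (Suc k)) \<and> summable (\<lambda>k. lterm n z (Suc k)) \<and>
            (RHS_F n \<longlongrightarrow> sqrt 5 * (\<Sum>k. fterm n z (Suc k)))
               (at z within {w. 0 < \<bar>w\<bar> \<and> \<bar>w\<bar> < 1 / gr_alpha}) \<and>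
            (RHS_L n \<longlongrightarrow> (\<Sum>k. lterm n z (Suc k)))
               (at z within {w. 0 < \<bar>w\<bar> \<and> \<bar>w\<bar> < 1 / gr_alpha}))"
  using sums_fterm_lterm[OF assms] fterm_lterm_boundary[OF assms] by blast

end
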